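(* Let $u$ be a sufficiently regular function and $H=(H^{\alpha\beta})$ a sufficiently regular symmetric 2-tensor field on $\mathcal{K}_{[s_0,s_1]}$. Let $I$ be a multi-index with values in $\{0,1,2\}$, $J$ a multi-index with values in $\{1,2\}$, $p=|I|+|J|$, $k=|J|$. Then, with a constant $C$ determined by $I,J$, $$\big|[\partial^IL^J,\underline{H}^{00}\partial_t\partial_t]u\big|\le C\!\!\!\sum_{|I_1|+|I_2|\le|I|,\ |J_1|+|J_2|\le|J|\atop |I_2|+|J_2|\ge1}\!\!\!|\partial^{I_2}L^{J_2}\underline{H}^{00}|\,|\partial_t\partial_t\partial^{I_1}L^{J_1}u|+C|\underline{H}^{00}|\sum_{0\le|J'|<|J|}|\partial_t\partial_t\partial^IL^{J'}u|$$ $$+Ct^{-1}\sum_{p_1+p_2\le p,\ p_1<p\atop k_1+k_2\le k}|\underline{H}^{00}|_{p_2,k_2}|\partial u|_{p_1+1,k_1+1}+Ct^{-1}|\underline{H}^{00}|\,|\partial u|_{p,k},$$ where $[\partial^IL^J,\underline{H}^{00}\partial_t\partial_t]u:=\partial^IL^J(\underline{H}^{00}\partial_t\partial_tu)-\underline{H}^{00}\partial_t\partial_t\partial^IL^Ju$.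
   Context: Coordinates $(t,x)=(x^0,x^1,x^2)$, $r=|x|$, $\partial_0=\partial_t$, summation over repeated indices. $\mathcal{K}_{[s_0,s_1]}=\{(t,x): t>r+1,\ s_0^2\le t^2-r^2\le s_1^2\}$. Boosts $L_a=x^a\partial_t+t\partial_a$; $\partial^I=\partial_{i_1}\cdots\partial_{i_m}$, $L^J=L_{j_1}\cdots L_{j_n}$. $\underline{H}^{00}:=H^{00}-2(x^a/t)H^{a0}+(x^ax^b/t^2)H^{ab}$. For a function $w$: $|w|_{p,k}:=\max|Z^Kw|$ over all operators $Z^K$ that are compositions, in any order, of $i$ partial derivatives $\partial_\alpha$ and $j$ boosts $L_a$ with $i+j\le p$, $j\le k$; $|\partial w|_{p,k}:=\max_\alpha|\partial_\alpha w|_{p,k}$. *)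

theory Defs
  imports "HOL-Analysis.Analysis"
begin

text \<open>Points of spacetime are vectors x :: real^3, with x$0 = t, x$1, x$2 spatial.\<close>

definition pd :: "3 \<Rightarrow> (real^3 \<Rightarrow> real) \<Rightarrow> real^3 \<Rightarrow> real" where
  "pd a w x = deriv (\<lambda>h. w (x + h *\<^sub>R axis a 1)) 0"

fun pds :: "3 list \<Rightarrow> (real^3 \<Rightarrow> real) \<Rightarrow> real^3 \<Rightarrow> real" where
  "pds [] w = w"
| "pds (a # as) w = pd a (pds as w)"

definition boost :: "3 \<Rightarrow> (real^3 \<Rightarrow> real) \<Rightarrow> real^3 \<Rightarrow> real" where
  "boost a w x = x$a * pd 0 w x + x$0 * pd a w x"

fun boosts :: "3 list \<Rightarrow> (real^3 \<Rightarrow> real) \<Rightarrow> real^3 \<Rightarrow> real" where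
  "boosts [] w = w"
| "boosts (a # as) w = boost a (boosts as w)"

definition smooth_on :: "(real^3) set \<Rightarrow> (real^3 \<Rightarrow> real) \<Rightarrow> bool" where
  "smooth_on U w \<longleftrightarrow> (\<forall>ds. pds ds w differentiable_on U)"

definition rad :: "real^3 \<Rightarrow> real" where
  "rad x = sqrt ((x$1)^2 + (x$2)^2)"

definition Kreg :: "real \<Rightarrow> real \<Rightarrow> (real^3) set" where
  "Kreg s0 s1 = {x. x$0 > rad x + 1 \<and> s0^2 \<le> (x$0)^2 - (rad x)^2 \<and> (x$0)^2 - (rad x)^2 \<le> s1^2}"

definition Hunder :: "(3 \<Rightarrow> 3 \<Rightarrow> real^3 \<Rightarrow> real) \<Rightarrow> real^3 \<Rightarrow> real" where
  "Hunder H x = H 0 0 x - 2 * (\<Sum>a\<in>{1,2}. (x$a / x$0) * H a 0 x)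
     + (\<Sum>a\<in>{1,2}. \<Sum>b\<in>{1,2}. (x$a * x$b / (x$0)^2) * H a b x)"

datatype zop = Dz "3" | Lz "3"

fun zapp :: "zop \<Rightarrow> (real^3 \<Rightarrow> real) \<Rightarrow> real^3 \<Rightarrow> real" where
  "zapp (Dz a) w = pd a w"
| "zapp (Lz a) w = boost a w"

fun applyZ :: "zop list \<Rightarrow> (real^3 \<Rightarrow> real) \<Rightarrow> real^3 \<Rightarrow> real" where
  "applyZ [] w = w"
| "applyZ (z # zs) w = zapp z (applyZ zs w)"

fun isL :: "zop \<Rightarrow> bool" where
  "isL (Dz _) = False"
| "isL (Lz _) = True"

definition Zops :: "zop set" where
  "Zops = {Dz 0, Dz 1, Dz 2, Lz 1, Lz 2}"

definition znorm :: "nat \<Rightarrow> nat \<Rightarrow> (real^3 \<Rightarrow> real) \<Rightarrow> real^3 \<Rightarrow> real" where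
  "znorm p k w x = Max {\<bar>applyZ zs w x\<bar> | zs. set zs \<subseteq> Zops \<and> length zs \<le> p
                          \<and> length (filter isL zs) \<le> k}"

definition dznorm :: "nat \<Rightarrow> nat \<Rightarrow> (real^3 \<Rightarrow> real) \<Rightarrow> real^3 \<Rightarrow> real" where
  "dznorm p k w x = Max {znorm p k (pd a w) x | a. a \<in> (UNIV :: 3 set)}"

end

theory Submission
  imports Defs
begin

(* By the Leibniz rule, d^I L^J (H d_t d_t u) is H d^I L^J d_t d_t u plus at most 2^(|I|+|J|)
   products (d^I2 L^J2 H) (d^I1 L^J1 d_t d_t u) with |I2| + |J2| >= 1. It remains to commute
   d_t d_t through d^I L^J. Since [d_c, L_b] is again a partial derivative (d_t or d_b), the
   commutator is a sum of terms d^I L^A d_i d_j L^B u with |A| + |B| < |J|. In the cone |x^a| <= t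
   we have d_a = (L_a - x^a d_t) / t, so each second derivative d_i d_j equals d_t d_t up to terms
   containing a boost and a factor 1/t, and these are bounded by t^-1 |du|_{p,k}. *)

lemma three_cases: "(i::3) = 0 \<or> i = 1 \<or> i = 2"
  using exhaust_3[of i] by auto

lemma has_real_derivative_along_line:
  fixes f :: "'a::real_normed_vector \<Rightarrow> real"
  assumes "(f has_derivative f') (at (y + s *\<^sub>R v))"
  shows "((\<lambda>h. f (y + h *\<^sub>R v)) has_real_derivative f' v) (at s)"
proof -
  have "((\<lambda>h. y + h *\<^sub>R v) has_derivative (\<lambda>h. h *\<^sub>R v)) (at s)"
    by (auto intro!: derivative_eq_intros)
  from has_derivative_compose[OF this assms]
  have "((\<lambda>h. f (y + h *\<^sub>R v)) has_derivative (\<lambda>h. f' (h *\<^sub>R v))) (at s)"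
    by (simp add: o_def)
  moreover have "(\<lambda>h. f' (h *\<^sub>R v)) = (*) (f' v)"
    using has_derivative_linear[OF assms] by (auto simp: linear_scale)
  ultimately show ?thesis
    by (simp add: has_field_derivative_def)
qed

lemma pd_eq_derivative:
  assumes "(f has_derivative f') (at x)"
  shows "pd a f x = f' (axis a 1)"
  unfolding pd_def
  by (rule DERIV_imp_deriv, rule has_real_derivative_along_line) (simp add: assms)

lemma pd_has_real_derivative_along_axis:
  assumes "f differentiable (at (y + s *\<^sub>R axis a 1))"
  shows "((\<lambda>h. f (y + h *\<^sub>R axis a 1)) has_real_derivative pd a f (y + s *\<^sub>R axis a 1)) (at s)"
proof -
  obtain f' where "(f has_derivative f') (at (y + s *\<^sub>R axis a 1))"
    using assms unfolding differentiable_def by blast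
  with has_real_derivative_along_line pd_eq_derivative show ?thesis by metis
qed

lemma pd_cong_on:
  assumes "open V" "\<forall>y\<in>V. f y = g y" "x \<in> V"
  shows "pd a f x = pd a g x"
proof -
  have "open ((\<lambda>h. x + h *\<^sub>R axis a 1) -` V)"
    by (rule continuous_open_vimage[OF assms(1)]) (auto intro!: continuous_intros)
  hence "eventually (\<lambda>h. x + h *\<^sub>R axis a 1 \<in> V) (nhds 0)"
    using eventually_nhds_in_open[of _ 0] assms(3) by fastforce
  hence "eventually (\<lambda>h. f (x + h *\<^sub>R axis a 1) = g (x + h *\<^sub>R axis a 1)) (nhds 0)"
    by eventually_elim (use assms(2) in blast)
  thus ?thesis unfolding pd_def by (rule deriv_cong_ev) simp
qed

lemma pd_add:
  assumes "f differentiable (at x)" "g differentiable (at x)"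
  shows "pd a (\<lambda>y. f y + g y) x = pd a f x + pd a g x"
proof -
  obtain f' g' where f': "(f has_derivative f') (at x)" and g': "(g has_derivative g') (at x)"
    using assms unfolding differentiable_def by blast
  from pd_eq_derivative[OF has_derivative_add[OF f' g']] pd_eq_derivative[OF f']
    pd_eq_derivative[OF g'] show ?thesis by simp
qed

lemma pd_mult:
  assumes "f differentiable (at x)" "g differentiable (at x)"
  shows "pd a (\<lambda>y. f y * g y) x = pd a f x * g x + f x * pd a g x"
proof -
  obtain f' g' where f': "(f has_derivative f') (at x)" and g': "(g has_derivative g') (at x)"
    using assms unfolding differentiable_def by blast
  from pd_eq_derivative[OF has_derivative_mult[OF f' g']] pd_eq_derivative[OF f']
    pd_eq_derivative[OF g'] show ?thesis by simp
qed

lemma pd_const [simp]: "pd a (\<lambda>y. c) = (\<lambda>y. 0)"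
  using pd_eq_derivative[OF has_derivative_const] by auto

lemma pd_coord: "pd a (\<lambda>y. y $ i) x = (if i = a then 1 else 0)"
  using pd_eq_derivative[OF bounded_linear_imp_has_derivative[OF bounded_linear_vec_nth]]
  by (simp add: axis_def)

lemma pd_inverse_coord:
  assumes "x $ i \<noteq> 0"
  shows "pd a (\<lambda>y. inverse (y $ i)) x = (if i = a then - (inverse (x $ i) * inverse (x $ i)) else 0)"
proof -
  have "((\<lambda>y. y $ i) has_derivative (\<lambda>h. h $ i)) (at x)"
    by (rule bounded_linear_imp_has_derivative[OF bounded_linear_vec_nth])
  from pd_eq_derivative[OF Deriv.has_derivative_inverse[OF assms this]] show ?thesis
    by (simp add: axis_def)
qed

section \<open>Smooth functions\<close>

lemma pds_append: "pds (xs @ ys) f = pds xs (pds ys f)"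
  by (induction xs) auto

(* Finite-order smoothness, so that closure under products can be proved by induction
   on the order. *)
definition smooth_upto :: "nat \<Rightarrow> (real^3) set \<Rightarrow> (real^3 \<Rightarrow> real) \<Rightarrow> bool" where
  "smooth_upto n V f \<longleftrightarrow> (\<forall>ds. length ds \<le> n \<longrightarrow> pds ds f differentiable_on V)"

lemma smooth_upto_0: "smooth_upto 0 V f \<longleftrightarrow> f differentiable_on V"
  unfolding smooth_upto_def by auto

lemma smooth_upto_Suc:
  "smooth_upto (Suc n) V f \<longleftrightarrow> f differentiable_on V \<and> (\<forall>a. smooth_upto n V (pd a f))"
proof
  assume f: "smooth_upto (Suc n) V f"
  have "smooth_upto n V (pd a f)" for a
    unfolding smooth_upto_def
    using f[unfolded smooth_upto_def, rule_format, of "_ @ [a]"] by (simp add: pds_append)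
  moreover have "f differentiable_on V"
    using f[unfolded smooth_upto_def, rule_format, of "[]"] by simp
  ultimately show "f differentiable_on V \<and> (\<forall>a. smooth_upto n V (pd a f))" by blast
next
  assume f: "f differentiable_on V \<and> (\<forall>a. smooth_upto n V (pd a f))"
  show "smooth_upto (Suc n) V f"
    unfolding smooth_upto_def
  proof (intro allI impI)
    fix ds :: "3 list" assume "length ds \<le> Suc n"
    with f show "pds ds f differentiable_on V"
      by (cases ds rule: rev_exhaust) (auto simp: smooth_upto_def pds_append)
  qed
qed

lemma smooth_on_iff_smooth_upto: "smooth_on V f \<longleftrightarrow> (\<forall>n. smooth_upto n V f)"
  unfolding smooth_on_def smooth_upto_def by (metis order_refl)

lemma smooth_upto_mono: "smooth_upto n V f \<Longrightarrow> m \<le> n \<Longrightarrow> smooth_upto m V f"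
  unfolding smooth_upto_def by auto

lemma smooth_upto_imp_differentiable:
  "open V \<Longrightarrow> smooth_upto n V f \<Longrightarrow> x \<in> V \<Longrightarrow> f differentiable (at x)"
  using smooth_upto_mono[of n V f 0]
  by (simp add: smooth_upto_0 differentiable_on_eq_differentiable_at)

lemma differentiable_on_cong_open:
  assumes "open V" "\<forall>y\<in>V. f y = g y" "f differentiable_on V"
  shows "g differentiable_on V"
  unfolding differentiable_on_eq_differentiable_at[OF assms(1)]
proof
  fix x assume x: "x \<in> V"
  then obtain f' where "(f has_derivative f') (at x)"
    using assms(1,3) differentiable_on_eq_differentiable_at differentiable_def by blast
  hence "(g has_derivative f') (at x)"
    by (rule has_derivative_transform_within_open[OF _ assms(1) x]) (use assms(2) in auto)
  thus "g differentiable (at x)" unfolding differentiable_def by blast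
qed

lemma smooth_upto_cong_on:
  assumes "open V" "\<forall>y\<in>V. f y = g y" "smooth_upto n V f"
  shows "smooth_upto n V g"
  using assms(2,3)
proof (induction n arbitrary: f g)
  case 0
  thus ?case using differentiable_on_cong_open[OF assms(1)] by (simp add: smooth_upto_0)
next
  case (Suc n)
  have "\<forall>y\<in>V. pd a f y = pd a g y" for a
    using pd_cong_on[OF assms(1) Suc.prems(1)] by blast
  with Suc.IH Suc.prems have "smooth_upto n V (pd a g)" for a
    by (meson smooth_upto_Suc)
  moreover have "g differentiable_on V"
    using Suc.prems differentiable_on_cong_open[OF assms(1)] by (auto simp: smooth_upto_Suc)
  ultimately show ?case by (simp add: smooth_upto_Suc)
qed

lemma smooth_upto_add:
  assumes "open V"
  shows "smooth_upto n V f \<Longrightarrow> smooth_upto n V g \<Longrightarrow> smooth_upto n V (\<lambda>y. f y + g y)"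
proof (induction n arbitrary: f g)
  case 0 thus ?case by (simp add: smooth_upto_0)
next
  case (Suc n)
  have "smooth_upto n V (pd a (\<lambda>y. f y + g y))" for a
  proof (rule smooth_upto_cong_on[OF assms])
    show "\<forall>y\<in>V. pd a f y + pd a g y = pd a (\<lambda>y. f y + g y) y"
      using pd_add smooth_upto_imp_differentiable[OF assms] Suc.prems by metis
    show "smooth_upto n V (\<lambda>y. pd a f y + pd a g y)"
      using Suc by (simp add: smooth_upto_Suc)
  qed
  with Suc.prems show ?case by (simp add: smooth_upto_Suc)
qed

lemma smooth_upto_mult:
  assumes "open V"
  shows "smooth_upto n V f \<Longrightarrow> smooth_upto n V g \<Longrightarrow> smooth_upto n V (\<lambda>y. f y * g y)"
proof (induction n arbitrary: f g)
  case 0 thus ?case by (simp add: smooth_upto_0)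
next
  case (Suc n)
  have "smooth_upto n V (pd a (\<lambda>y. f y * g y))" for a
  proof (rule smooth_upto_cong_on[OF assms])
    show "\<forall>y\<in>V. pd a f y * g y + f y * pd a g y = pd a (\<lambda>y. f y * g y) y"
      using pd_mult smooth_upto_imp_differentiable[OF assms] Suc.prems by metis
    have "smooth_upto n V f" "smooth_upto n V g"
      using Suc.prems smooth_upto_mono le_SucI by blast+
    with Suc show "smooth_upto n V (\<lambda>y. pd a f y * g y + f y * pd a g y)"
      by (intro smooth_upto_add[OF assms]) (simp_all add: smooth_upto_Suc)
  qed
  with Suc.prems show ?case by (simp add: smooth_upto_Suc)
qed

lemma smooth_upto_const: "smooth_upto n V (\<lambda>y. c)"
  by (induction n arbitrary: c) (simp_all add: smooth_upto_0 smooth_upto_Suc)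

lemma smooth_upto_coord: "smooth_upto n V (\<lambda>y. y $ i)"
proof (cases n)
  case (Suc m)
  have "pd a (\<lambda>y. y $ i) = (\<lambda>y. if i = a then 1 else 0)" for a
    by (rule ext) (simp add: pd_coord)
  with Suc show ?thesis
    by (simp add: smooth_upto_Suc smooth_upto_const bounded_linear_imp_differentiable_on
        bounded_linear_vec_nth)
qed (simp add: smooth_upto_0 bounded_linear_imp_differentiable_on bounded_linear_vec_nth)

lemma smooth_upto_inverse_coord:
  assumes V: "open V" and nz: "\<forall>y\<in>V. y $ i \<noteq> 0"
  shows "smooth_upto n V (\<lambda>y. inverse (y $ i))"
proof (induction n)
  case 0
  show ?case
    using nz by (simp add: smooth_upto_0 differentiable_on_inverse bounded_linear_imp_differentiable_on
        bounded_linear_vec_nth)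
next
  case (Suc n)
  have "smooth_upto n V (pd a (\<lambda>y. inverse (y $ i)))" for a
  proof (rule smooth_upto_cong_on[OF V])
    show "\<forall>y\<in>V. (if i = a then - 1 else 0) * (inverse (y $ i) * inverse (y $ i))
        = pd a (\<lambda>y. inverse (y $ i)) y"
      using nz pd_inverse_coord by simp
    show "smooth_upto n V (\<lambda>y. (if i = a then - 1 else 0) * (inverse (y $ i) * inverse (y $ i)))"
      by (intro smooth_upto_mult[OF V] smooth_upto_const Suc.IH)
  qed
  moreover have "(\<lambda>y. inverse (y $ i)) differentiable_on V"
    using Suc.IH smooth_upto_mono[of n V _ 0] by (simp add: smooth_upto_0)
  ultimately show ?case by (simp add: smooth_upto_Suc)
qed

lemma dist_add_two_axes:
  fixes x :: "real^3"
  shows "dist (x + u *\<^sub>R axis a 1 + w *\<^sub>R axis b 1) x \<le> \<bar>u\<bar> + \<bar>w\<bar>"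
  using norm_triangle_ineq[of "u *\<^sub>R axis a (1::real)" "w *\<^sub>R axis b 1"]
  by (simp add: dist_norm add.assoc)

lemma second_difference_mean_value:
  fixes x :: "real^3" and f :: "real^3 \<Rightarrow> real"
  assumes h: "h > 0"
    and df: "\<And>y. dist y x \<le> 2*h \<Longrightarrow> f differentiable (at y)"
    and dg: "\<And>y. dist y x \<le> 2*h \<Longrightarrow> pd b f differentiable (at y)"
  shows "\<exists>\<xi>. dist \<xi> x \<le> 2*h \<and>
    f (x + h *\<^sub>R axis a 1 + h *\<^sub>R axis b 1) - f (x + h *\<^sub>R axis a 1) - f (x + h *\<^sub>R axis b 1) + f x
      = h^2 * pd a (pd b f) \<xi>"
proof -
  define ea :: "real^3" where "ea = axis a 1"
  define eb :: "real^3" where "eb = axis b 1"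
  define g where "g s = f (x + h *\<^sub>R ea + s *\<^sub>R eb) - f (x + s *\<^sub>R eb)" for s
  define g' where "g' s = pd b f (x + h *\<^sub>R ea + s *\<^sub>R eb) - pd b f (x + s *\<^sub>R eb)" for s
  have "DERIV g s :> g' s" if "0 \<le> s" "s \<le> h" for s
  proof -
    have "dist (x + h *\<^sub>R ea + s *\<^sub>R eb) x \<le> 2*h" "dist (x + s *\<^sub>R eb) x \<le> 2*h"
      using dist_add_two_axes[of x h a s b] dist_add_two_axes[of x 0 a s b] that h
      unfolding ea_def eb_def by simp_all
    then have "((\<lambda>s. f ((x + h *\<^sub>R ea) + s *\<^sub>R eb)) has_real_derivative
        pd b f ((x + h *\<^sub>R ea) + s *\<^sub>R eb)) (at s)"
      "((\<lambda>s. f (x + s *\<^sub>R eb)) has_real_derivative pd b f (x + s *\<^sub>R eb)) (at s)"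
      unfolding eb_def by (auto intro!: pd_has_real_derivative_along_axis df)
    from DERIV_diff[OF this] show ?thesis unfolding g_def g'_def by simp
  qed
  then obtain \<sigma> where \<sigma>: "0 < \<sigma>" "\<sigma> < h" "g h - g 0 = h * g' \<sigma>"
    using MVT2[OF h, of g g'] by auto
  define \<phi> where "\<phi> r = pd b f (x + \<sigma> *\<^sub>R eb + r *\<^sub>R ea)" for r
  have "DERIV \<phi> r :> pd a (pd b f) (x + \<sigma> *\<^sub>R eb + r *\<^sub>R ea)" if "0 \<le> r" "r \<le> h" for r
  proof -
    have "dist (x + \<sigma> *\<^sub>R eb + r *\<^sub>R ea) x \<le> 2*h"
      using dist_add_two_axes[of x \<sigma> b r a] that \<sigma> unfolding ea_def eb_def by simp
    thus ?thesis
      unfolding \<phi>_def ea_def by (intro pd_has_real_derivative_along_axis dg) (simp add: ea_def)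
  qed
  then obtain \<rho> where \<rho>: "0 < \<rho>" "\<rho> < h"
     "\<phi> h - \<phi> 0 = h * pd a (pd b f) (x + \<sigma> *\<^sub>R eb + \<rho> *\<^sub>R ea)"
    using MVT2[OF h, of \<phi> "\<lambda>r. pd a (pd b f) (x + \<sigma> *\<^sub>R eb + r *\<^sub>R ea)"] by auto
  have "g' \<sigma> = \<phi> h - \<phi> 0"
    unfolding g'_def \<phi>_def by (simp add: algebra_simps)
  with \<sigma>(3) \<rho>(3) have "g h - g 0 = h^2 * pd a (pd b f) (x + \<sigma> *\<^sub>R eb + \<rho> *\<^sub>R ea)"
    by (simp add: power2_eq_square)
  moreover have "g h - g 0 =
      f (x + h *\<^sub>R axis a 1 + h *\<^sub>R axis b 1) - f (x + h *\<^sub>R axis a 1) - f (x + h *\<^sub>R axis b 1) + f x"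
    unfolding g_def ea_def eb_def by simp
  moreover have "dist (x + \<sigma> *\<^sub>R eb + \<rho> *\<^sub>R ea) x \<le> 2*h"
    using dist_add_two_axes[of x \<sigma> b \<rho> a] \<rho> \<sigma> unfolding ea_def eb_def by simp
  ultimately show ?thesis by metis
qed

(* Both mixed partials are limits of the same symmetric second difference quotient. *)
theorem pd_commute:
  assumes V: "open V" and x: "x \<in> V" and f: "smooth_upto 2 V f"
  shows "pd a (pd b f) x = pd b (pd a f) x"
proof (rule ccontr)
  define A where "A = pd a (pd b f) x"
  define B where "B = pd b (pd a f) x"
  assume "pd a (pd b f) x \<noteq> pd b (pd a f) x"
  hence e: "\<bar>A - B\<bar> / 2 > 0" unfolding A_def B_def by simp
  have f1: "smooth_upto 1 V (pd c f)" for c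
    using f by (simp add: smooth_upto_Suc numeral_2_eq_2)
  have "continuous (at x) (pd a (pd b f))" "continuous (at x) (pd b (pd a f))"
    using f1 smooth_upto_imp_differentiable[OF V _ x] differentiable_imp_continuous_within
    by (metis One_nat_def smooth_upto_Suc)+
  then obtain d1 d2 where
    d1: "d1 > 0" "\<And>y. dist y x < d1 \<Longrightarrow> dist (pd a (pd b f) y) A < \<bar>A - B\<bar> / 2" and
    d2: "d2 > 0" "\<And>y. dist y x < d2 \<Longrightarrow> dist (pd b (pd a f) y) B < \<bar>A - B\<bar> / 2"
    using e unfolding continuous_at_eps_delta A_def B_def by metis
  obtain d3 where d3: "d3 > 0" "ball x d3 \<subseteq> V" using V x open_contains_ball by blast
  define h where "h = min d1 (min d2 d3) / 3"
  have h: "h > 0" "2*h < d1" "2*h < d2" "2*h < d3" using d1 d2 d3 unfolding h_def by auto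
  have "f differentiable (at y)" "pd c f differentiable (at y)" if "dist y x \<le> 2*h" for y c
  proof -
    have "y \<in> V" using that h d3 by (auto simp: dist_commute)
    with f f1 show "f differentiable (at y)" "pd c f differentiable (at y)"
      using smooth_upto_imp_differentiable[OF V] by blast+
  qed
  then obtain \<xi> \<eta> where "dist \<xi> x \<le> 2*h" "dist \<eta> x \<le> 2*h" and
    "f (x + h *\<^sub>R axis a 1 + h *\<^sub>R axis b 1) - f (x + h *\<^sub>R axis a 1) - f (x + h *\<^sub>R axis b 1) + f x
      = h^2 * pd a (pd b f) \<xi>"
    "f (x + h *\<^sub>R axis b 1 + h *\<^sub>R axis a 1) - f (x + h *\<^sub>R axis b 1) - f (x + h *\<^sub>R axis a 1) + f x
      = h^2 * pd b (pd a f) \<eta>"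
    using second_difference_mean_value[OF h(1), of x f] by metis
  moreover from this have "pd a (pd b f) \<xi> = pd b (pd a f) \<eta>"
    using h(1) by (simp add: algebra_simps)
  ultimately have "dist A (pd a (pd b f) \<xi>) < \<bar>A - B\<bar> / 2" "dist B (pd a (pd b f) \<xi>) < \<bar>A - B\<bar> / 2"
    using d1(2)[of \<xi>] d2(2)[of \<eta>] h by (simp_all add: dist_commute)
  hence "dist A B < \<bar>A - B\<bar>" by (rule dist_triangle_half_l)
  thus False by (simp add: dist_real_def)
qed

lemma smooth_on_pd: "smooth_on V f \<Longrightarrow> smooth_on V (pd a f)"
  by (simp add: smooth_on_iff_smooth_upto) (metis smooth_upto_Suc)

lemma smooth_on_add:
  "open V \<Longrightarrow> smooth_on V f \<Longrightarrow> smooth_on V g \<Longrightarrow> smooth_on V (\<lambda>y. f y + g y)"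
  by (simp add: smooth_on_iff_smooth_upto smooth_upto_add)

lemma smooth_on_mult:
  "open V \<Longrightarrow> smooth_on V f \<Longrightarrow> smooth_on V g \<Longrightarrow> smooth_on V (\<lambda>y. f y * g y)"
  by (simp add: smooth_on_iff_smooth_upto smooth_upto_mult)

lemma smooth_on_const: "smooth_on V (\<lambda>y. c)"
  by (simp add: smooth_on_iff_smooth_upto smooth_upto_const)

lemma smooth_on_coord: "smooth_on V (\<lambda>y. y $ i)"
  by (simp add: smooth_on_iff_smooth_upto smooth_upto_coord)

lemma smooth_on_inverse_coord:
  "open V \<Longrightarrow> \<forall>y\<in>V. y $ i \<noteq> 0 \<Longrightarrow> smooth_on V (\<lambda>y. inverse (y $ i))"
  by (simp add: smooth_on_iff_smooth_upto smooth_upto_inverse_coord)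

lemma smooth_on_cong_on:
  "open V \<Longrightarrow> \<forall>y\<in>V. f y = g y \<Longrightarrow> smooth_on V f \<Longrightarrow> smooth_on V g"
  using smooth_upto_cong_on smooth_on_iff_smooth_upto by metis

lemma smooth_on_imp_differentiable:
  "open V \<Longrightarrow> smooth_on V f \<Longrightarrow> x \<in> V \<Longrightarrow> f differentiable (at x)"
  using smooth_upto_imp_differentiable smooth_on_iff_smooth_upto by metis

lemma smooth_on_pd_commute:
  "open V \<Longrightarrow> smooth_on V f \<Longrightarrow> x \<in> V \<Longrightarrow> pd a (pd b f) x = pd b (pd a f) x"
  using pd_commute smooth_on_iff_smooth_upto by metis

lemma smooth_on_subset: "smooth_on U f \<Longrightarrow> V \<subseteq> U \<Longrightarrow> smooth_on V f"
  unfolding smooth_on_def using differentiable_on_subset by blast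

section \<open>Words of vector fields and the Leibniz rule\<close>

lemma boost_eq: "boost a w = (\<lambda>y. y $ a * pd 0 w y + y $ 0 * pd a w y)"
  by (rule ext) (simp add: boost_def)

lemma smooth_on_boost: "open V \<Longrightarrow> smooth_on V w \<Longrightarrow> smooth_on V (boost a w)"
  unfolding boost_eq by (intro smooth_on_add smooth_on_mult smooth_on_coord smooth_on_pd)

lemma smooth_on_zapp: "open V \<Longrightarrow> smooth_on V w \<Longrightarrow> smooth_on V (zapp z w)"
  by (cases z) (auto intro: smooth_on_boost smooth_on_pd)

lemma smooth_on_applyZ: "open V \<Longrightarrow> smooth_on V w \<Longrightarrow> smooth_on V (applyZ zs w)"
  by (induction zs) (auto intro: smooth_on_zapp)

lemma applyZ_append: "applyZ (xs @ ys) f = applyZ xs (applyZ ys f)"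
  by (induction xs) auto

lemma pds_boosts_eq_applyZ: "pds I (boosts J f) = applyZ (map Dz I @ map Lz J) f"
proof -
  have "pds I f = applyZ (map Dz I) f" "boosts J f = applyZ (map Lz J) f" for f
    by (induction I) (induction J, auto)+
  thus ?thesis by (simp add: applyZ_append)
qed

lemma smooth_on_pds_boosts: "open V \<Longrightarrow> smooth_on V f \<Longrightarrow> smooth_on V (pds I (boosts J f))"
  unfolding pds_boosts_eq_applyZ by (rule smooth_on_applyZ)

lemma zapp_cong_on:
  "open V \<Longrightarrow> \<forall>y\<in>V. f y = g y \<Longrightarrow> \<forall>y\<in>V. zapp z f y = zapp z g y"
  using pd_cong_on[of V f g] by (cases z) (auto simp: boost_def)

lemma applyZ_cong_on:
  "open V \<Longrightarrow> \<forall>y\<in>V. f y = g y \<Longrightarrow> \<forall>y\<in>V. applyZ zs f y = applyZ zs g y"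
  by (induction zs) (auto dest: zapp_cong_on)

lemma zapp_add:
  assumes "open V" "smooth_on V f" "smooth_on V g" "x \<in> V"
  shows "zapp z (\<lambda>y. f y + g y) x = zapp z f x + zapp z g x"
  using pd_add[OF smooth_on_imp_differentiable[OF assms(1,2,4)]
      smooth_on_imp_differentiable[OF assms(1,3,4)]]
  by (cases z) (auto simp: boost_def algebra_simps)

lemma zapp_mult:
  assumes "open V" "smooth_on V f" "smooth_on V g" "x \<in> V"
  shows "zapp z (\<lambda>y. f y * g y) x = zapp z f x * g x + f x * zapp z g x"
  using pd_mult[OF smooth_on_imp_differentiable[OF assms(1,2,4)]
      smooth_on_imp_differentiable[OF assms(1,3,4)]]
  by (cases z) (auto simp: boost_def algebra_simps)

lemma zapp_zero [simp]: "zapp z (\<lambda>y. 0) = (\<lambda>y. 0)"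
  by (cases z) (auto simp: boost_eq)

lemma applyZ_zero [simp]: "applyZ zs (\<lambda>y. 0) = (\<lambda>y. 0)"
  by (induction zs) auto

lemma applyZ_add:
  assumes V: "open V" and f: "smooth_on V f" and g: "smooth_on V g" and x: "x \<in> V"
  shows "applyZ zs (\<lambda>y. f y + g y) x = applyZ zs f x + applyZ zs g x"
  using x
proof (induction zs arbitrary: x)
  case (Cons z zs)
  have "applyZ (z # zs) (\<lambda>y. f y + g y) x = zapp z (\<lambda>y. applyZ zs f y + applyZ zs g y) x"
    using zapp_cong_on[OF V] Cons by simp
  also have "\<dots> = applyZ (z # zs) f x + applyZ (z # zs) g x"
    using zapp_add[OF V smooth_on_applyZ[OF V f] smooth_on_applyZ[OF V g] Cons.prems] by simp
  finally show ?case .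
qed simp

lemma zapp_sum_list:
  assumes V: "open V" and P: "\<forall>p\<in>set ps. smooth_on V (P p)" and x: "x \<in> V"
  shows "zapp z (\<lambda>y. \<Sum>p\<leftarrow>ps. P p y) x = (\<Sum>p\<leftarrow>ps. zapp z (P p) x)"
  using P
proof (induction ps)
  case (Cons q ps)
  have "smooth_on V (\<lambda>y. \<Sum>p\<leftarrow>ps. P p y)"
    using Cons.prems by (induction ps) (auto intro: smooth_on_const smooth_on_add[OF V])
  with Cons zapp_add[OF V _ _ x] show ?case by simp
qed simp

fun splittings :: "'a list \<Rightarrow> ('a list \<times> 'a list) list" where
  "splittings [] = [([], [])]"
| "splittings (x # xs) =
    map (\<lambda>(a, b). (a, x # b)) (splittings xs) @ map (\<lambda>(a, b). (x # a, b)) (splittings xs)"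

lemma length_splittings: "length (splittings xs) = 2 ^ length xs"
  by (induction xs) auto

lemma splittings_first: "\<exists>R. splittings xs = ([], xs) # R \<and> (\<forall>(a, b)\<in>set R. a \<noteq> [])"
proof (induction xs)
  case (Cons x xs)
  then obtain R where "splittings xs = ([], xs) # R" "\<forall>(a, b)\<in>set R. a \<noteq> []" by blast
  thus ?case
    by (intro exI[of _ "map (\<lambda>(a, b). (a, x # b)) R @ map (\<lambda>(a, b). (x # a, b)) (splittings xs)"])
      auto
qed simp

lemma splittings_length:
  "(a, b) \<in> set (splittings xs) \<Longrightarrow> length a + length b = length xs"
  by (induction xs arbitrary: a b) auto

lemma splittings_map:
  "splittings (map f xs) = map (\<lambda>(a, b). (map f a, map f b)) (splittings xs)"
  by (induction xs) (auto simp: case_prod_unfold)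

lemma in_splittings_Cons: "(a, b) \<in> set (splittings (x # xs)) \<longleftrightarrow>
    (\<exists>b'. b = x # b' \<and> (a, b') \<in> set (splittings xs)) \<or> (\<exists>a'. a = x # a' \<and> (a', b) \<in> set (splittings xs))"
  by force

lemma splittings_append:
  "(a, b) \<in> set (splittings (xs @ ys)) \<Longrightarrow> \<exists>a1 b1 a2 b2.
     (a1, b1) \<in> set (splittings xs) \<and> (a2, b2) \<in> set (splittings ys) \<and> a = a1 @ a2 \<and> b = b1 @ b2"
proof (induction xs arbitrary: a b)
  case Nil thus ?case by force
next
  case (Cons x xs)
  from Cons.prems consider
      (left) b' where "(a, b') \<in> set (splittings (xs @ ys))" "b = x # b'"
    | (right) a' where "(a', b) \<in> set (splittings (xs @ ys))" "a = x # a'"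
    unfolding append_Cons in_splittings_Cons by blast
  thus ?case
  proof cases
    case left
    with Cons.IH obtain a1 b1 a2 b2 where "(a1, b1) \<in> set (splittings xs)"
      "(a2, b2) \<in> set (splittings ys)" "a = a1 @ a2" "b' = b1 @ b2" by blast
    moreover from this have "(a1, x # b1) \<in> set (splittings (x # xs))"
      unfolding in_splittings_Cons by blast
    ultimately show ?thesis using left by (metis append_Cons)
  next
    case right
    with Cons.IH obtain a1 b1 a2 b2 where "(a1, b1) \<in> set (splittings xs)"
      "(a2, b2) \<in> set (splittings ys)" "a' = a1 @ a2" "b = b1 @ b2" by blast
    moreover from this have "(x # a1, b1) \<in> set (splittings (x # xs))"
      unfolding in_splittings_Cons by blast
    ultimately show ?thesis using right by (metis append_Cons)
  qed
qed

theorem applyZ_leibniz: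
  assumes V: "open V" and f: "smooth_on V f" and g: "smooth_on V g" and x: "x \<in> V"
  shows "applyZ zs (\<lambda>y. f y * g y) x = (\<Sum>(a, b)\<leftarrow>splittings zs. applyZ a f x * applyZ b g x)"
  using x
proof (induction zs arbitrary: x)
  case (Cons z zs)
  define P where "P p y = applyZ (fst p) f y * applyZ (snd p) g y" for p y
  have P: "\<forall>p\<in>set (splittings zs). smooth_on V (P p)"
    unfolding P_def by (auto intro!: smooth_on_mult smooth_on_applyZ V f g)
  have "\<forall>y\<in>V. applyZ zs (\<lambda>y. f y * g y) y = (\<Sum>p\<leftarrow>splittings zs. P p y)"
    using Cons.IH by (simp add: P_def case_prod_beta)
  from zapp_cong_on[OF V this] Cons.prems
  have "applyZ (z # zs) (\<lambda>y. f y * g y) x = zapp z (\<lambda>y. \<Sum>p\<leftarrow>splittings zs. P p y) x"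
    by simp
  also have "\<dots> = (\<Sum>p\<leftarrow>splittings zs. zapp z (P p) x)"
    by (rule zapp_sum_list[OF V P Cons.prems])
  also have "\<dots> = (\<Sum>p\<leftarrow>splittings zs.
      applyZ (fst p) f x * applyZ (z # snd p) g x + applyZ (z # fst p) f x * applyZ (snd p) g x)"
    unfolding P_def
    using zapp_mult[OF V smooth_on_applyZ[OF V f] smooth_on_applyZ[OF V g] Cons.prems]
    by (simp add: algebra_simps)
  also have "\<dots> = (\<Sum>(a, b)\<leftarrow>splittings (z # zs). applyZ a f x * applyZ b g x)"
    by (simp add: sum_list_addf o_def case_prod_beta)
  finally show ?case .
qed simp

lemma splittings_subset:
  "(a, b) \<in> set (splittings xs) \<Longrightarrow> set a \<subseteq> set xs \<and> set b \<subseteq> set xs"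
  by (induction xs arbitrary: a b) (simp, fastforce)

lemma splittings_pds_boosts:
  assumes "(a, b) \<in> set (splittings (map Dz I @ map Lz J))"
  obtains I1 I2 J1 J2 where "a = map Dz I2 @ map Lz J2" "b = map Dz I1 @ map Lz J1"
    "length I1 + length I2 = length I" "length J1 + length J2 = length J"
    "set J1 \<subseteq> set J" "set J2 \<subseteq> set J"
proof -
  obtain a1 b1 a2 b2 where "(a1, b1) \<in> set (splittings (map Dz I))"
    "(a2, b2) \<in> set (splittings (map Lz J))" "a = a1 @ a2" "b = b1 @ b2"
    using splittings_append[OF assms] by blast
  moreover from this obtain I2 I1 J2 J1 where "(I2, I1) \<in> set (splittings I)"
    "(J2, J1) \<in> set (splittings J)" "a1 = map Dz I2" "b1 = map Dz I1" "a2 = map Lz J2" "b2 = map Lz J1"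
    unfolding splittings_map by auto
  ultimately show ?thesis
    by (intro that[of I2 J2 I1 J1]) (auto dest: splittings_length splittings_subset)
qed

lemma pds_boosts_mult_remainder_le:
  assumes V: "open V" and f: "smooth_on V f" and g: "smooth_on V g" and x: "x \<in> V"
    and T: "0 \<le> T"
    and bound: "\<And>I1 I2 J1 J2. length I1 + length I2 = length I \<Longrightarrow> length J1 + length J2 = length J
      \<Longrightarrow> set J1 \<subseteq> set J \<Longrightarrow> set J2 \<subseteq> set J \<Longrightarrow> length I2 + length J2 \<ge> 1
      \<Longrightarrow> \<bar>pds I2 (boosts J2 f) x * pds I1 (boosts J1 g) x\<bar> \<le> T"
  shows "\<bar>pds I (boosts J (\<lambda>y. f y * g y)) x - f x * pds I (boosts J g) x\<bar>
    \<le> 2 ^ (length I + length J) * T"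
proof -
  define W where "W = map Dz I @ map Lz J"
  obtain R where R: "splittings W = ([], W) # R" "\<forall>(a, b)\<in>set R. a \<noteq> []"
    using splittings_first by blast
  have term_le: "\<bar>applyZ a f x * applyZ b g x\<bar> \<le> T" if ab: "(a, b) \<in> set R" for a b
  proof -
    from ab R have ab_W: "(a, b) \<in> set (splittings W)" and "a \<noteq> []" by auto
    from ab_W obtain I1 I2 J1 J2 where "a = map Dz I2 @ map Lz J2" "b = map Dz I1 @ map Lz J1"
      "length I1 + length I2 = length I" "length J1 + length J2 = length J"
      "set J1 \<subseteq> set J" "set J2 \<subseteq> set J"
      unfolding W_def by (rule splittings_pds_boosts)
    moreover from this \<open>a \<noteq> []\<close> have "length I2 + length J2 \<ge> 1"
      by (cases I2; cases J2) auto
    ultimately show ?thesis using bound by (simp add: pds_boosts_eq_applyZ)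
  qed
  have "pds I (boosts J (\<lambda>y. f y * g y)) x - f x * pds I (boosts J g) x
      = (\<Sum>(a, b)\<leftarrow>R. applyZ a f x * applyZ b g x)"
    using applyZ_leibniz[OF V f g x, of W] R(1) by (simp add: pds_boosts_eq_applyZ W_def)
  also have "\<bar>\<dots>\<bar> \<le> (\<Sum>p\<leftarrow>R. \<bar>case p of (a, b) \<Rightarrow> applyZ a f x * applyZ b g x\<bar>)"
    using sum_list_abs[of "map (\<lambda>(a, b). applyZ a f x * applyZ b g x) R"] by (simp add: o_def)
  also have "\<dots> \<le> (\<Sum>p\<leftarrow>R. T)"
    using term_le by (intro sum_list_mono) auto
  also have "\<dots> \<le> 2 ^ (length I + length J) * T"
  proof -
    have "length R < 2 ^ (length I + length J)"
      using arg_cong[OF R(1), of length] by (simp add: length_splittings W_def)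
    hence "real (length R) \<le> 2 ^ (length I + length J)"
      by (metis of_nat_le_iff of_nat_numeral of_nat_power less_imp_le)
    with T show ?thesis by (simp add: sum_list_triv mult_right_mono)
  qed
  finally show ?thesis .
qed

section \<open>Commutators with boosts\<close>

(* [d_c, L_b] g for b <> 0, from d_c x^b = delta_cb and d_c t = delta_c0. *)
definition pd_boost_comm :: "3 \<Rightarrow> 3 \<Rightarrow> (real^3 \<Rightarrow> real) \<Rightarrow> real^3 \<Rightarrow> real" where
  "pd_boost_comm c b g = (if c = b then pd 0 g else if c = 0 then pd b g else (\<lambda>y. 0))"

lemma smooth_on_pd_boost_comm: "smooth_on V g \<Longrightarrow> smooth_on V (pd_boost_comm c b g)"
  by (auto simp: pd_boost_comm_def intro: smooth_on_pd smooth_on_const)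

lemma pd_boost:
  assumes V: "open V" and g: "smooth_on V g" and y: "y \<in> V" and b: "b \<noteq> 0"
  shows "pd c (boost b g) y = boost b (pd c g) y + pd_boost_comm c b g y"
proof -
  have d: "(\<lambda>y. y $ i) differentiable (at y)" "pd i g differentiable (at y)"
    "(\<lambda>z. z $ i * pd j g z) differentiable (at y)" for i j
    using smooth_on_imp_differentiable[OF V _ y] smooth_on_coord smooth_on_pd[OF g]
      smooth_on_mult[OF V smooth_on_coord smooth_on_pd[OF g]] by blast+
  have "pd c (boost b g) y = (if b = c then 1 else 0) * pd 0 g y + y $ b * pd c (pd 0 g) y
      + ((if 0 = c then 1 else 0) * pd b g y + y $ 0 * pd c (pd b g) y)"
    unfolding boost_eq by (simp add: pd_add[OF d(3) d(3)] pd_mult[OF d(1,2)] pd_coord)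
  also have "\<dots> = boost b (pd c g) y + pd_boost_comm c b g y"
    using b smooth_on_pd_commute[OF V g y, of c] by (auto simp: boost_def pd_boost_comm_def)
  finally show ?thesis .
qed

lemma applyZ_pd_boost:
  assumes V: "open V" and g: "smooth_on V g" and x: "x \<in> V" and b: "b \<noteq> 0"
  shows "applyZ W (pd c (boost b g)) x = applyZ W (boost b (pd c g)) x + applyZ W (pd_boost_comm c b g) x"
proof -
  have "\<forall>y\<in>V. pd c (boost b g) y = boost b (pd c g) y + pd_boost_comm c b g y"
    using pd_boost[OF V g _ b] by blast
  from applyZ_cong_on[OF V this] x
  have "applyZ W (pd c (boost b g)) x = applyZ W (\<lambda>y. boost b (pd c g) y + pd_boost_comm c b g y) x"
    by blast
  also have "\<dots> = applyZ W (boost b (pd c g)) x + applyZ W (pd_boost_comm c b g) x"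
    by (rule applyZ_add[OF V _ _ x]) (intro smooth_on_boost smooth_on_pd smooth_on_pd_boost_comm g V)+
  finally show ?thesis .
qed

lemma applyZ_pd_pd_boost:
  assumes V: "open V" and h: "smooth_on V h" and x: "x \<in> V" and b: "b \<noteq> 0"
  shows "applyZ W (pd \<alpha> (pd \<beta> (boost b h))) x = applyZ W (boost b (pd \<alpha> (pd \<beta> h))) x
    + applyZ W (pd_boost_comm \<alpha> b (pd \<beta> h)) x + applyZ W (pd \<alpha> (pd_boost_comm \<beta> b h)) x"
  using applyZ_pd_boost[OF V h x b, of "W @ [Dz \<alpha>]" \<beta>]
    applyZ_pd_boost[OF V smooth_on_pd[OF h] x b, of W \<alpha>]
  by (simp add: applyZ_append)

lemma applyZ_pd_boost_comm_le:
  assumes "\<And>\<gamma>. \<bar>applyZ W (pd \<gamma> g) x\<bar> \<le> C" and "0 \<le> C"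
  shows "\<bar>applyZ W (pd_boost_comm c b g) x\<bar> \<le> C"
  using assms by (simp add: pd_boost_comm_def)

abbreviation num_boosts :: "zop list \<Rightarrow> nat" where
  "num_boosts zs \<equiv> length (filter isL zs)"

lemma num_boosts_pds_boosts [simp]: "num_boosts (map Dz I @ map Lz J) = length J"
  by (induction I) (induction J, auto)+

lemma Dz_in_Zops [simp]: "Dz a \<in> Zops"
  using three_cases[of a] by (auto simp: Zops_def)

lemma Lz_in_Zops [simp]: "Lz b \<in> Zops \<longleftrightarrow> b = 1 \<or> b = 2"
  by (auto simp: Zops_def)

lemma finite_Z_words: "finite {zs. set zs \<subseteq> Zops \<and> length zs \<le> p \<and> num_boosts zs \<le> k}"
  by (rule finite_subset[OF _ finite_lists_length_le[of Zops p]]) (auto simp: Zops_def)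

lemma znorm_eq_Max_image:
  "znorm p k w x = Max ((\<lambda>zs. \<bar>applyZ zs w x\<bar>) `
     {zs. set zs \<subseteq> Zops \<and> length zs \<le> p \<and> num_boosts zs \<le> k})"
  unfolding znorm_def by (rule arg_cong[of _ _ Max]) auto

lemma applyZ_le_znorm:
  "set zs \<subseteq> Zops \<Longrightarrow> length zs \<le> p \<Longrightarrow> num_boosts zs \<le> k \<Longrightarrow> \<bar>applyZ zs w x\<bar> \<le> znorm p k w x"
  unfolding znorm_eq_Max_image by (rule Max_ge) (auto intro: finite_Z_words)

lemma znorm_nonneg: "0 \<le> znorm p k w x"
  using applyZ_le_znorm[of "[]" p k w x] by simp

lemma znorm_mono: "p \<le> p' \<Longrightarrow> k \<le> k' \<Longrightarrow> znorm p k w x \<le> znorm p' k' w x"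
  unfolding znorm_eq_Max_image
  by (rule Max_mono) (auto intro!: finite_Z_words exI[of _ "[]"])

lemma dznorm_eq_Max_image: "dznorm p k w x = Max ((\<lambda>a. znorm p k (pd a w) x) ` UNIV)"
  unfolding dznorm_def by (rule arg_cong[of _ _ Max]) auto

lemma znorm_pd_le_dznorm: "znorm p k (pd a w) x \<le> dznorm p k w x"
  unfolding dznorm_eq_Max_image by (rule Max_ge) auto

lemma dznorm_nonneg: "0 \<le> dznorm p k w x"
  using znorm_nonneg[of p k "pd 0 w" x] znorm_pd_le_dznorm[of p k 0 w x] by linarith

lemma dznorm_mono:
  assumes "p \<le> p'" "k \<le> k'"
  shows "dznorm p k w x \<le> dznorm p' k' w x"
proof (unfold dznorm_eq_Max_image[of p k], rule Max.boundedI)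
  fix d assume "d \<in> range (\<lambda>a. znorm p k (pd a w) x)"
  then obtain a where "d = znorm p k (pd a w) x" by blast
  also have "\<dots> \<le> znorm p' k' (pd a w) x" using assms by (rule znorm_mono)
  also have "\<dots> \<le> dznorm p' k' w x" by (rule znorm_pd_le_dznorm)
  finally show "d \<le> dznorm p' k' w x" .
qed auto

lemma applyZ_pd_le_dznorm:
  "set zs \<subseteq> Zops \<Longrightarrow> length zs \<le> p \<Longrightarrow> num_boosts zs \<le> k \<Longrightarrow> \<bar>applyZ zs (pd a w) x\<bar> \<le> dznorm p k w x"
  using applyZ_le_znorm[of zs p k "pd a w" x] znorm_pd_le_dznorm[of p k a w x] by linarith

section \<open>Commutator estimates\<close>

(* Commuting d_beta through W2 down to u only creates commutators [d_c, L_b], which are again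
   partial derivatives; so the result is a sum of words, no longer than W1 @ W2, applied to
   first derivatives of u. *)
lemma applyZ_inner_pd_le_dznorm:
  assumes V: "open V" and u: "smooth_on V u" and x: "x \<in> V"
  shows "set W1 \<subseteq> Zops \<Longrightarrow> set W2 \<subseteq> Zops \<Longrightarrow> \<bar>applyZ (W1 @ Dz \<beta> # W2) u x\<bar>
    \<le> 3 ^ length W2 * dznorm (length W1 + length W2) (num_boosts W1 + num_boosts W2) u x"
proof (induction W2 arbitrary: W1 \<beta>)
  case Nil
  thus ?case using applyZ_pd_le_dznorm[of W1] by (simp add: applyZ_append)
next
  case (Cons z W2)
  let ?D = "dznorm (length W1 + length (z # W2)) (num_boosts W1 + num_boosts (z # W2)) u x"
  have IH: "\<bar>applyZ (W @ Dz \<gamma> # W2) u x\<bar> \<le> 3 ^ length W2 * ?D"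
    if "set W \<subseteq> Zops" "length W \<le> Suc (length W1)"
      "num_boosts W + num_boosts W2 \<le> num_boosts W1 + num_boosts (z # W2)" for W \<gamma>
  proof -
    have "\<bar>applyZ (W @ Dz \<gamma> # W2) u x\<bar>
        \<le> 3 ^ length W2 * dznorm (length W + length W2) (num_boosts W + num_boosts W2) u x"
      using Cons that by simp
    also have "\<dots> \<le> 3 ^ length W2 * ?D"
      using that by (intro mult_left_mono dznorm_mono) auto
    finally show ?thesis .
  qed
  have D: "0 \<le> ?D" by (rule dznorm_nonneg)
  show ?case
  proof (cases z)
    case (Dz \<gamma>)
    with IH[of "W1 @ [Dz \<beta>]" \<gamma>] Cons.prems D show ?thesis
      by (simp add: order_trans[OF _ mult_right_mono])
  next
    case (Lz b)
    with Cons.prems have "b \<noteq> 0" by auto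
    define g where "g = applyZ W2 u"
    have g: "smooth_on V g" unfolding g_def by (rule smooth_on_applyZ[OF V u])
    have "\<bar>applyZ W1 (boost b (pd \<beta> g)) x\<bar> \<le> 3 ^ length W2 * ?D"
      using IH[of "W1 @ [Lz b]" \<beta>] Cons.prems Lz by (simp add: applyZ_append g_def)
    moreover have "\<bar>applyZ W1 (pd_boost_comm \<beta> b g) x\<bar> \<le> 3 ^ length W2 * ?D"
      using IH[of W1] Cons.prems D by (intro applyZ_pd_boost_comm_le) (simp_all add: applyZ_append g_def)
    ultimately have "\<bar>applyZ (W1 @ Dz \<beta> # z # W2) u x\<bar> \<le> 2 * (3 ^ length W2 * ?D)"
      using applyZ_pd_boost[OF V g x \<open>b \<noteq> 0\<close>, of W1 \<beta>] Lz by (simp add: applyZ_append g_def)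
    also have "\<dots> \<le> 3 ^ length (z # W2) * ?D" using D by (simp add: mult_right_mono)
    finally show ?thesis .
  qed
qed

lemma abs_pd_le_boost:
  fixes x :: "real^3"
  assumes t: "x $ 0 > 0" and a: "\<bar>x $ a\<bar> \<le> x $ 0"
  shows "\<bar>pd a g x\<bar> \<le> \<bar>boost a g x\<bar> / x $ 0 + \<bar>pd 0 g x\<bar>"
proof -
  have "x $ 0 * \<bar>pd a g x\<bar> = \<bar>boost a g x - x $ a * pd 0 g x\<bar>"
    using t by (simp add: boost_def abs_mult)
  also have "\<dots> \<le> \<bar>boost a g x\<bar> + \<bar>x $ a\<bar> * \<bar>pd 0 g x\<bar>"
    by (simp add: abs_mult[symmetric] abs_triangle_ineq4)
  also have "\<dots> \<le> \<bar>boost a g x\<bar> + x $ 0 * \<bar>pd 0 g x\<bar>"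
    using a by (simp add: mult_right_mono)
  finally show ?thesis using t by (simp add: field_simps)
qed

lemma second_pd_le_pd0_pd0:
  assumes V: "open V" and u: "smooth_on V u" and x: "x \<in> V"
    and t: "x $ 0 > 0" and a1: "\<bar>x $ 1\<bar> \<le> x $ 0" and a2: "\<bar>x $ 2\<bar> \<le> x $ 0"
    and W: "set W \<subseteq> Zops"
  shows "\<bar>pd \<gamma> (pd \<delta> (applyZ W u)) x\<bar> \<le> \<bar>pd 0 (pd 0 (applyZ W u)) x\<bar>
     + 2 * (3 ^ length W * dznorm (length W + 1) (num_boosts W + 1) u x / x $ 0)"
proof -
  define w where "w = applyZ W u"
  have w: "smooth_on V w" unfolding w_def by (rule smooth_on_applyZ[OF V u])
  define E where "E = 3 ^ length W * dznorm (length W + 1) (num_boosts W + 1) u x / x $ 0"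
  have E: "0 \<le> E" unfolding E_def using t dznorm_nonneg by simp
  have ax: "\<bar>x $ c\<bar> \<le> x $ 0" if "c \<noteq> 0" for c
    using that a1 a2 three_cases[of c] by auto
  have boost_term: "\<bar>boost c (pd e w) x\<bar> / x $ 0 \<le> E" if c: "c \<noteq> 0" for c e
  proof -
    have "\<bar>applyZ ([Lz c] @ Dz e # W) u x\<bar>
        \<le> 3 ^ length W * dznorm (length [Lz c] + length W) (num_boosts [Lz c] + num_boosts W) u x"
      using W c three_cases[of c] by (intro applyZ_inner_pd_le_dznorm[OF V u x]) auto
    thus ?thesis unfolding E_def w_def using t by (simp add: divide_right_mono add.commute)
  qed
  have pd_0: "\<bar>pd 0 (pd e w) x\<bar> \<le> \<bar>pd 0 (pd 0 w) x\<bar> + E" for e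
  proof (cases "e = 0")
    case False
    have "pd 0 (pd e w) x = pd e (pd 0 w) x" by (rule smooth_on_pd_commute[OF V w x])
    with abs_pd_le_boost[OF t ax[OF False], of "pd 0 w"] boost_term[OF False, of 0] show ?thesis
      by simp
  qed (simp add: E)
  have "\<bar>pd \<gamma> (pd \<delta> w) x\<bar> \<le> \<bar>pd 0 (pd 0 w) x\<bar> + 2 * E"
  proof (cases "\<gamma> = 0")
    case False
    with abs_pd_le_boost[OF t ax[OF False], of "pd \<delta> w"] boost_term[OF False, of \<delta>] pd_0[of \<delta>]
    show ?thesis by simp
  qed (use pd_0[of \<delta>] E in simp)
  thus ?thesis unfolding w_def E_def .
qed

lemma pds_pd_commute:
  assumes V: "open V" and f: "smooth_on V f"
  shows "y \<in> V \<Longrightarrow> pds I (pd a f) y = pd a (pds I f) y"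
proof (induction I arbitrary: y)
  case (Cons i I)
  have "smooth_on V (pds I f)"
    using smooth_on_pds_boosts[OF V f, of I "[]"] by simp
  have "pd i (pds I (pd a f)) y = pd i (pd a (pds I f)) y"
    using pd_cong_on[OF V _ Cons.prems] Cons.IH by blast
  also have "\<dots> = pd a (pd i (pds I f)) y"
    by (rule smooth_on_pd_commute[OF V \<open>smooth_on V (pds I f)\<close> Cons.prems])
  finally show ?case by simp
qed simp

definition boost_indices_below :: "nat \<Rightarrow> 3 list set" where
  "boost_indices_below m = {J. set J \<subseteq> {1, 2} \<and> length J < m}"

lemma finite_boost_indices_below: "finite (boost_indices_below m)"
  unfolding boost_indices_below_def
  by (rule finite_subset[OF _ finite_lists_length_le[of "{1, 2}" m]]) auto

lemma boost_indices_below_mono: "m \<le> m' \<Longrightarrow> boost_indices_below m \<subseteq> boost_indices_below m'"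
  unfolding boost_indices_below_def by auto

definition second_pds_sum :: "(real^3 \<Rightarrow> real) \<Rightarrow> 3 list \<Rightarrow> nat \<Rightarrow> real^3 \<Rightarrow> real" where
  "second_pds_sum u I m x =
    (\<Sum>J\<in>boost_indices_below m. \<Sum>\<gamma>\<in>UNIV. \<Sum>\<delta>\<in>UNIV. \<bar>pd \<gamma> (pd \<delta> (pds I (boosts J u))) x\<bar>)"

lemma second_pds_sum_nonneg: "0 \<le> second_pds_sum u I m x"
  unfolding second_pds_sum_def by (intro sum_nonneg) auto

lemma second_pd_le_second_pds_sum:
  assumes "J \<in> boost_indices_below m"
  shows "\<bar>pd \<gamma> (pd \<delta> (pds I (boosts J u))) x\<bar> \<le> second_pds_sum u I m x"
proof -
  have "\<bar>pd \<gamma> (pd \<delta> (pds I (boosts J u))) x\<bar> \<le> (\<Sum>\<delta>\<in>UNIV. \<bar>pd \<gamma> (pd \<delta> (pds I (boosts J u))) x\<bar>)"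
    by (rule member_le_sum) auto
  also have "\<dots> \<le> (\<Sum>\<gamma>\<in>UNIV. \<Sum>\<delta>\<in>UNIV. \<bar>pd \<gamma> (pd \<delta> (pds I (boosts J u))) x\<bar>)"
    by (rule member_le_sum[of _ _ "\<lambda>\<gamma>. \<Sum>\<delta>\<in>UNIV. \<bar>pd \<gamma> (pd \<delta> (pds I (boosts J u))) x\<bar>"])
      (auto intro: sum_nonneg)
  also have "\<dots> \<le> second_pds_sum u I m x"
    unfolding second_pds_sum_def
    by (rule member_le_sum[of _ _ "\<lambda>J. \<Sum>\<gamma>\<in>UNIV. \<Sum>\<delta>\<in>UNIV. \<bar>pd \<gamma> (pd \<delta> (pds I (boosts J u))) x\<bar>"])
      (auto intro!: sum_nonneg assms finite_boost_indices_below)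
  finally show ?thesis .
qed

lemma second_pds_sum_mono: "m \<le> m' \<Longrightarrow> second_pds_sum u I m x \<le> second_pds_sum u I m' x"
  unfolding second_pds_sum_def
  by (rule sum_mono2[OF finite_boost_indices_below boost_indices_below_mono]) (auto intro!: sum_nonneg)

lemma pds_boosts_second_pd_le:
  assumes V: "open V" and u: "smooth_on V u" and x: "x \<in> V"
  shows "set A \<subseteq> {1, 2} \<Longrightarrow> set B \<subseteq> {1, 2} \<Longrightarrow>
    \<bar>pds I (boosts A (pd \<alpha> (pd \<beta> (boosts B u)))) x\<bar>
      \<le> 5 ^ length A * second_pds_sum u I (length A + length B + 1) x"
proof (induction A arbitrary: \<alpha> \<beta> B rule: rev_induct)
  case Nil
  have h: "smooth_on V (boosts B u)"
    using smooth_on_pds_boosts[OF V u, of "[]" B] by simp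
  have "pds I (pd \<alpha> (pd \<beta> (boosts B u))) x = pd \<alpha> (pds I (pd \<beta> (boosts B u))) x"
    using pds_pd_commute[OF V smooth_on_pd[OF h] x] .
  also have "\<dots> = pd \<alpha> (pd \<beta> (pds I (boosts B u))) x"
    using pd_cong_on[OF V _ x] pds_pd_commute[OF V h] by blast
  finally show ?case
    using second_pd_le_second_pds_sum[of B "length B + 1"] Nil
    by (simp add: boost_indices_below_def)
next
  case (snoc b A)
  hence b: "b \<noteq> 0" and A: "set A \<subseteq> {1, 2}" by auto
  define h where "h = boosts B u"
  have h: "smooth_on V h"
    using smooth_on_pds_boosts[OF V u, of "[]" B] by (simp add: h_def)
  define P where "P = map Dz I @ map Lz A"
  let ?S = "second_pds_sum u I (length (A @ [b]) + length B + 1) x"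
  have IH: "\<bar>applyZ P (pd \<alpha>' (pd \<beta>' h)) x\<bar> \<le> 5 ^ length A * ?S" for \<alpha>' \<beta>'
  proof -
    have "\<bar>applyZ P (pd \<alpha>' (pd \<beta>' h)) x\<bar> \<le> 5 ^ length A * second_pds_sum u I (length A + length B + 1) x"
      using snoc.IH[OF A snoc.prems(2)] by (simp add: P_def h_def pds_boosts_eq_applyZ)
    also have "\<dots> \<le> 5 ^ length A * ?S"
      by (intro mult_left_mono second_pds_sum_mono) auto
    finally show ?thesis .
  qed
  have "\<bar>applyZ P (pd \<alpha> (pd \<beta> (boost b h))) x\<bar> \<le> 5 ^ length A * ?S"
    using snoc.IH[OF A, of "b # B" \<alpha> \<beta>] snoc.prems b
    by (simp add: P_def h_def pds_boosts_eq_applyZ)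
  moreover have "\<bar>applyZ P (pd_boost_comm \<alpha> b (pd \<beta> h)) x\<bar> \<le> 5 ^ length A * ?S"
    using IH second_pds_sum_nonneg by (intro applyZ_pd_boost_comm_le) auto
  moreover have "\<bar>applyZ (P @ [Dz \<alpha>]) (pd_boost_comm \<beta> b h) x\<bar> \<le> 5 ^ length A * ?S"
    using IH second_pds_sum_nonneg by (intro applyZ_pd_boost_comm_le) (auto simp: applyZ_append)
  ultimately have "\<bar>applyZ P (boost b (pd \<alpha> (pd \<beta> h))) x\<bar> \<le> 3 * (5 ^ length A * ?S)"
    using applyZ_pd_pd_boost[OF V h x b, of P \<alpha> \<beta>] by (simp add: applyZ_append)
  also have "\<dots> \<le> 5 ^ length (A @ [b]) * ?S"
    using second_pds_sum_nonneg[of u I _ x] by (simp add: mult_right_mono)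
  finally show ?case
    by (simp add: P_def h_def pds_boosts_eq_applyZ applyZ_append)
qed

lemma boosts_pd0_pd0_commutator_le:
  assumes V: "open V" and u: "smooth_on V u" and x: "x \<in> V"
  shows "set A \<subseteq> {1, 2} \<Longrightarrow> set J \<subseteq> {1, 2} \<Longrightarrow>
    \<bar>pds I (boosts A (boosts J (pd 0 (pd 0 u)))) x - pds I (boosts A (pd 0 (pd 0 (boosts J u)))) x\<bar>
      \<le> 2 * length J * 5 ^ (length A + length J) * second_pds_sum u I (length A + length J) x"
proof (induction J arbitrary: A)
  case (Cons b J)
  hence b: "b \<noteq> 0" by auto
  define h where "h = boosts J u"
  have h: "smooth_on V h"
    using smooth_on_pds_boosts[OF V u, of "[]" J] by (simp add: h_def)
  define P where "P = map Dz I @ map Lz A"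
  let ?S = "second_pds_sum u I (length A + length (b # J)) x"
  let ?c = "(5::real) ^ (length A + length (b # J))"
  have IH: "\<bar>applyZ P (boost b (boosts J (pd 0 (pd 0 u)))) x - applyZ P (boost b (pd 0 (pd 0 h))) x\<bar>
      \<le> 2 * length J * ?c * ?S"
    using Cons.IH[of "A @ [b]"] Cons.prems
    by (simp add: P_def h_def pds_boosts_eq_applyZ applyZ_append)
  have commutator_terms: "\<bar>applyZ P (pd \<gamma> (pd \<delta> h)) x\<bar> \<le> ?c * ?S" for \<gamma> \<delta>
  proof -
    have "\<bar>applyZ P (pd \<gamma> (pd \<delta> h)) x\<bar> \<le> 5 ^ length A * ?S"
      using pds_boosts_second_pd_le[OF V u x, of A J I \<gamma> \<delta>] Cons.prems
      by (simp add: P_def h_def pds_boosts_eq_applyZ)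
    also have "\<dots> \<le> ?c * ?S"
      by (intro mult_right_mono power_increasing second_pds_sum_nonneg) auto
    finally show ?thesis .
  qed
  have "pds I (boosts A (boosts (b # J) (pd 0 (pd 0 u)))) x - pds I (boosts A (pd 0 (pd 0 (boosts (b # J) u)))) x
      = (applyZ P (boost b (boosts J (pd 0 (pd 0 u)))) x - applyZ P (boost b (pd 0 (pd 0 h))) x)
        - applyZ P (pd b (pd 0 h)) x - applyZ P (pd 0 (pd b h)) x"
    using applyZ_pd_pd_boost[OF V h x b, of P 0 0] b
    by (simp add: P_def h_def pds_boosts_eq_applyZ pd_boost_comm_def)
  with IH commutator_terms[of b 0] commutator_terms[of 0 b]
  have "\<bar>pds I (boosts A (boosts (b # J) (pd 0 (pd 0 u)))) x
      - pds I (boosts A (pd 0 (pd 0 (boosts (b # J) u)))) x\<bar> \<le> 2 * length J * ?c * ?S + 2 * (?c * ?S)"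
    by linarith
  thus ?case by (simp add: algebra_simps)
qed simp

lemma second_pds_sum_le:
  assumes V: "open V" and u: "smooth_on V u" and x: "x \<in> V"
    and t: "x $ 0 > 0" and a1: "\<bar>x $ 1\<bar> \<le> x $ 0" and a2: "\<bar>x $ 2\<bar> \<le> x $ 0"
    and N: "length J \<le> N" and M: "length I + length J \<le> M"
  shows "second_pds_sum u I (length J) x
    \<le> 9 * (\<Sum>J'\<in>boost_indices_below (length J). \<bar>pd 0 (pd 0 (pds I (boosts J' u))) x\<bar>)
      + 18 * card (boost_indices_below N) * 3 ^ M * (dznorm (length I + length J) (length J) u x / x $ 0)"
proof -
  define E where "E = 2 * 3 ^ M * (dznorm (length I + length J) (length J) u x / x $ 0)"
  have E: "0 \<le> E" unfolding E_def using t dznorm_nonneg by simp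
  have term_le: "\<bar>pd \<gamma> (pd \<delta> (pds I (boosts J' u))) x\<bar> \<le> \<bar>pd 0 (pd 0 (pds I (boosts J' u))) x\<bar> + E"
    if J': "J' \<in> boost_indices_below (length J)" for J' \<gamma> \<delta>
  proof -
    let ?W = "map Dz I @ map Lz J'"
    have J'J: "length J' < length J" "set J' \<subseteq> {1, 2}"
      using J' by (auto simp: boost_indices_below_def)
    have "3 ^ length ?W * dznorm (length ?W + 1) (num_boosts ?W + 1) u x
        \<le> 3 ^ M * dznorm (length I + length J) (length J) u x"
      using J'J M by (intro mult_mono power_increasing dznorm_mono dznorm_nonneg) auto
    hence "2 * (3 ^ length ?W * dznorm (length ?W + 1) (num_boosts ?W + 1) u x / x $ 0) \<le> E"
      unfolding E_def using t by (simp add: divide_right_mono)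
    moreover have "set ?W \<subseteq> Zops" using J'J by auto
    ultimately show ?thesis
      using second_pd_le_pd0_pd0[OF V u x t a1 a2, of ?W \<gamma> \<delta>] by (simp add: pds_boosts_eq_applyZ)
  qed
  have "second_pds_sum u I (length J) x
      \<le> (\<Sum>J'\<in>boost_indices_below (length J). \<Sum>\<gamma>\<in>(UNIV::3 set). \<Sum>\<delta>\<in>(UNIV::3 set).
           \<bar>pd 0 (pd 0 (pds I (boosts J' u))) x\<bar> + E)"
    unfolding second_pds_sum_def by (intro sum_mono term_le)
  also have "\<dots> = 9 * (\<Sum>J'\<in>boost_indices_below (length J). \<bar>pd 0 (pd 0 (pds I (boosts J' u))) x\<bar>)
      + 9 * card (boost_indices_below (length J)) * E"
    by (simp add: sum.distrib sum_distrib_left algebra_simps)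
  also have "\<dots> \<le> 9 * (\<Sum>J'\<in>boost_indices_below (length J). \<bar>pd 0 (pd 0 (pds I (boosts J' u))) x\<bar>)
      + 9 * card (boost_indices_below N) * E"
    using card_mono[OF finite_boost_indices_below boost_indices_below_mono[OF N]] E
    by (simp add: mult_right_mono)
  finally show ?thesis by (simp add: E_def algebra_simps)
qed

definition commutator_const :: "nat \<Rightarrow> nat \<Rightarrow> real" where
  "commutator_const N M = 18 * N * 5 ^ N * (1 + 2 * card (boost_indices_below N) * 3 ^ M)"

lemma commutator_const_nonneg: "0 \<le> commutator_const N M"
  unfolding commutator_const_def by simp

theorem pds_boosts_pd0_pd0_commutator_le:
  assumes V: "open V" and u: "smooth_on V u" and x: "x \<in> V"
    and t: "x $ 0 > 0" and a1: "\<bar>x $ 1\<bar> \<le> x $ 0" and a2: "\<bar>x $ 2\<bar> \<le> x $ 0"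
    and J: "set J \<subseteq> {1, 2}" and N: "length J \<le> N" and M: "length I + length J \<le> M"
  shows "\<bar>pds I (boosts J (pd 0 (pd 0 u))) x - pd 0 (pd 0 (pds I (boosts J u))) x\<bar>
    \<le> commutator_const N M *
      ((\<Sum>J'\<in>boost_indices_below (length J). \<bar>pd 0 (pd 0 (pds I (boosts J' u))) x\<bar>)
       + dznorm (length I + length J) (length J) u x / x $ 0)"
proof -
  define Q where "Q = (\<Sum>J'\<in>boost_indices_below (length J). \<bar>pd 0 (pd 0 (pds I (boosts J' u))) x\<bar>)"
  define D where "D = dznorm (length I + length J) (length J) u x / x $ 0"
  define c where "c = real (card (boost_indices_below N))"
  have Q: "0 \<le> Q" unfolding Q_def by (rule sum_nonneg) auto
  have D: "0 \<le> D" unfolding D_def using t dznorm_nonneg by simp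
  have f: "smooth_on V (boosts J u)"
    using smooth_on_pds_boosts[OF V u, of "[]" J] by simp
  have "pds I (pd 0 (pd 0 (boosts J u))) x = pd 0 (pds I (pd 0 (boosts J u))) x"
    by (rule pds_pd_commute[OF V smooth_on_pd[OF f] x])
  also have "\<dots> = pd 0 (pd 0 (pds I (boosts J u))) x"
    using pd_cong_on[OF V _ x] pds_pd_commute[OF V f] by blast
  finally have "\<bar>pds I (boosts J (pd 0 (pd 0 u))) x - pd 0 (pd 0 (pds I (boosts J u))) x\<bar>
      \<le> 2 * real (length J) * 5 ^ length J * second_pds_sum u I (length J) x"
    using boosts_pd0_pd0_commutator_le[OF V u x, of "[]" J I] J by simp
  also have "\<dots> \<le> (2 * real N * 5 ^ N) * (9 * Q + 18 * c * 3 ^ M * D)"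
  proof (rule mult_mono)
    show "2 * real (length J) * 5 ^ length J \<le> 2 * real N * 5 ^ N"
      using N by (intro mult_mono power_increasing) auto
    show "second_pds_sum u I (length J) x \<le> 9 * Q + 18 * c * 3 ^ M * D"
      using second_pds_sum_le[OF V u x t a1 a2 N M] by (simp add: Q_def D_def c_def)
  qed (simp_all add: second_pds_sum_nonneg)
  also have "\<dots> \<le> commutator_const N M * (Q + D)"
    using Q D by (simp add: commutator_const_def c_def algebra_simps mult_right_mono)
  finally show ?thesis unfolding Q_def D_def .
qed

(* The first and the third sum in the bound of lemma5p9. *)
definition leibniz_products ::
    "3 list \<Rightarrow> 3 list \<Rightarrow> (real^3 \<Rightarrow> real) \<Rightarrow> (real^3 \<Rightarrow> real) \<Rightarrow> real^3 \<Rightarrow> real" where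
  "leibniz_products I J f u x = (\<Sum>(I1, I2, J1, J2) \<in> {(I1, I2, J1, J2). length I1 + length I2 \<le> length I
      \<and> set J1 \<subseteq> {1, 2} \<and> set J2 \<subseteq> {1, 2} \<and> length J1 + length J2 \<le> length J
      \<and> length I2 + length J2 \<ge> 1}.
    \<bar>pds I2 (boosts J2 f) x\<bar> * \<bar>pd 0 (pd 0 (pds I1 (boosts J1 u))) x\<bar>)"

definition lower_norm_products ::
    "nat \<Rightarrow> nat \<Rightarrow> (real^3 \<Rightarrow> real) \<Rightarrow> (real^3 \<Rightarrow> real) \<Rightarrow> real^3 \<Rightarrow> real" where
  "lower_norm_products p k f u x = (\<Sum>(p1, p2, k1, k2) \<in> {(p1, p2, k1, k2). p1 + p2 \<le> p \<and> p1 < p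
      \<and> k1 + k2 \<le> k}. znorm p2 k2 f x * dznorm (p1 + 1) (k1 + 1) u x)"

lemma le_leibniz_products:
  fixes I1 I2 J1 J2 :: "3 list"
  assumes "length I1 + length I2 \<le> length I" "set J1 \<subseteq> {1, 2}" "set J2 \<subseteq> {1, 2}"
    "length J1 + length J2 \<le> length J" "length I2 + length J2 \<ge> 1"
  shows "\<bar>pds I2 (boosts J2 f) x\<bar> * \<bar>pd 0 (pd 0 (pds I1 (boosts J1 u))) x\<bar> \<le> leibniz_products I J f u x"
proof -
  let ?S = "{(I1 :: 3 list, I2 :: 3 list, J1 :: 3 list, J2 :: 3 list). length I1 + length I2 \<le> length I
      \<and> set J1 \<subseteq> {1, 2} \<and> set J2 \<subseteq> {1, 2} \<and> length J1 + length J2 \<le> length J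
      \<and> length I2 + length J2 \<ge> 1}"
  let ?L = "\<lambda>n. {xs :: 3 list. set xs \<subseteq> UNIV \<and> length xs \<le> n}"
  have "finite (?L (length I) \<times> ?L (length I) \<times> ?L (length J) \<times> ?L (length J))"
    by (intro finite_cartesian_product finite_lists_length_le) auto
  hence "finite ?S" by (rule finite_subset[rotated]) auto
  hence "(\<lambda>(I1, I2, J1, J2). \<bar>pds I2 (boosts J2 f) x\<bar> * \<bar>pd 0 (pd 0 (pds I1 (boosts J1 u))) x\<bar>)
      (I1, I2, J1, J2) \<le> leibniz_products I J f u x"
    unfolding leibniz_products_def by (rule member_le_sum[rotated 2]) (use assms in auto)
  thus ?thesis by simp
qed

lemma le_lower_norm_products:
  assumes "p1 + p2 \<le> p" "p1 < p" "k1 + k2 \<le> k"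
  shows "znorm p2 k2 f x * dznorm (p1 + 1) (k1 + 1) u x \<le> lower_norm_products p k f u x"
proof -
  have "finite {(p1, p2, k1, k2). p1 + p2 \<le> p \<and> p1 < p \<and> k1 + k2 \<le> k}"
    by (rule finite_subset[of _ "{..p} \<times> {..p} \<times> {..k} \<times> {..k}"]) auto
  hence "(\<lambda>(p1, p2, k1, k2). znorm p2 k2 f x * dznorm (p1 + 1) (k1 + 1) u x) (p1, p2, k1, k2)
      \<le> lower_norm_products p k f u x"
    unfolding lower_norm_products_def
    by (rule member_le_sum[rotated 2]) (use assms in \<open>auto intro: mult_nonneg_nonneg znorm_nonneg dznorm_nonneg\<close>)
  thus ?thesis by simp
qed

lemma leibniz_products_nonneg: "0 \<le> leibniz_products I J f u x"
  unfolding leibniz_products_def by (intro sum_nonneg) auto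

lemma lower_norm_products_nonneg: "0 \<le> lower_norm_products p k f u x"
  unfolding lower_norm_products_def
  by (intro sum_nonneg) (auto intro: mult_nonneg_nonneg znorm_nonneg dznorm_nonneg)

lemma boost_sum_le_leibniz_products:
  assumes "length I1 + length I2 = length I" "length J1 + length J2 = length J"
    "set J2 \<subseteq> {1, 2}" "length I2 + length J2 \<ge> 1"
  shows "\<bar>pds I2 (boosts J2 f) x\<bar>
      * (\<Sum>J'\<in>boost_indices_below (length J1). \<bar>pd 0 (pd 0 (pds I1 (boosts J' u))) x\<bar>)
    \<le> card (boost_indices_below (length J)) * leibniz_products I J f u x"
proof -
  have "\<bar>pds I2 (boosts J2 f) x\<bar>
      * (\<Sum>J'\<in>boost_indices_below (length J1). \<bar>pd 0 (pd 0 (pds I1 (boosts J' u))) x\<bar>)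
      \<le> (\<Sum>J'\<in>boost_indices_below (length J1). leibniz_products I J f u x)"
    unfolding sum_distrib_left using assms
    by (intro sum_mono le_leibniz_products) (auto simp: boost_indices_below_def)
  also have "\<dots> \<le> card (boost_indices_below (length J)) * leibniz_products I J f u x"
    using card_mono[OF finite_boost_indices_below boost_indices_below_mono[of "length J1" "length J"]]
      assms(2) leibniz_products_nonneg
    by (simp add: mult_right_mono)
  finally show ?thesis .
qed

lemma dznorm_le_lower_norm_products:
  assumes "length I1 + length I2 = length I" "length J1 + length J2 = length J"
    "set J2 \<subseteq> {1, 2}" "length I2 + length J2 \<ge> 1"
  shows "\<bar>pds I2 (boosts J2 f) x\<bar> * dznorm (length I1 + length J1) (length J1) u x
    \<le> lower_norm_products (length I + length J) (length J) f u x"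
proof -
  have "\<bar>pds I2 (boosts J2 f) x\<bar> \<le> znorm (length I2 + length J2) (length J2) f x"
    unfolding pds_boosts_eq_applyZ using assms(3) by (intro applyZ_le_znorm) auto
  moreover have "dznorm (length I1 + length J1) (length J1) u x
      \<le> dznorm (length I1 + length J1 + 1) (length J1 + 1) u x"
    by (rule dznorm_mono) auto
  ultimately have "\<bar>pds I2 (boosts J2 f) x\<bar> * dznorm (length I1 + length J1) (length J1) u x
      \<le> znorm (length I2 + length J2) (length J2) f x * dznorm (length I1 + length J1 + 1) (length J1 + 1) u x"
    by (intro mult_mono) (auto simp: dznorm_nonneg znorm_nonneg)
  also have "\<dots> \<le> lower_norm_products (length I + length J) (length J) f u x"
    using assms by (intro le_lower_norm_products) auto
  finally show ?thesis .
qed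

lemma leibniz_term_le:
  assumes V: "open V" and u: "smooth_on V u" and x: "x \<in> V"
    and t: "x $ 0 > 0" and a1: "\<bar>x $ 1\<bar> \<le> x $ 0" and a2: "\<bar>x $ 2\<bar> \<le> x $ 0"
    and I12: "length I1 + length I2 = length I" and J12: "length J1 + length J2 = length J"
    and J1: "set J1 \<subseteq> {1, 2}" and J2: "set J2 \<subseteq> {1, 2}" and nontrivial: "length I2 + length J2 \<ge> 1"
  defines "K \<equiv> commutator_const (length J) (length I + length J)"
    and "c \<equiv> real (card (boost_indices_below (length J)))"
  shows "\<bar>pds I2 (boosts J2 f) x * pds I1 (boosts J1 (pd 0 (pd 0 u))) x\<bar>
    \<le> (1 + K) * (1 + c) * (leibniz_products I J f u x
      + lower_norm_products (length I + length J) (length J) f u x / x $ 0)"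
proof -
  define h where "h = \<bar>pds I2 (boosts J2 f) x\<bar>"
  define Q where "Q = (\<Sum>J'\<in>boost_indices_below (length J1). \<bar>pd 0 (pd 0 (pds I1 (boosts J' u))) x\<bar>)"
  define D where "D = dznorm (length I1 + length J1) (length J1) u x"
  define A where "A = leibniz_products I J f u x"
  define B where "B = lower_norm_products (length I + length J) (length J) f u x / x $ 0"
  have nonneg: "0 \<le> h" "0 \<le> K" "0 \<le> c" "0 \<le> A" "0 \<le> B"
    using commutator_const_nonneg leibniz_products_nonneg lower_norm_products_nonneg t
    by (simp_all add: h_def K_def c_def A_def B_def)
  have "\<bar>pds I1 (boosts J1 (pd 0 (pd 0 u))) x\<bar>
      \<le> \<bar>pd 0 (pd 0 (pds I1 (boosts J1 u))) x\<bar> + K * (Q + D / x $ 0)"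
    using pds_boosts_pd0_pd0_commutator_le[OF V u x t a1 a2 J1, where N = "length J"
        and M = "length I + length J" and I = I1]
      I12 J12 unfolding K_def Q_def D_def by linarith
  hence "\<bar>pds I2 (boosts J2 f) x * pds I1 (boosts J1 (pd 0 (pd 0 u))) x\<bar>
      \<le> h * (\<bar>pd 0 (pd 0 (pds I1 (boosts J1 u))) x\<bar> + K * (Q + D / x $ 0))"
    unfolding h_def abs_mult by (rule mult_left_mono) simp
  also have "\<dots> = h * \<bar>pd 0 (pd 0 (pds I1 (boosts J1 u))) x\<bar> + K * (h * Q) + K * (h * D / x $ 0)"
    by (simp add: algebra_simps)
  also have "\<dots> \<le> A + K * (c * A) + K * B"
    unfolding A_def B_def h_def Q_def D_def c_def using I12 J12 J1 J2 nontrivial t nonneg(2)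
    by (intro add_mono mult_left_mono le_leibniz_products boost_sum_le_leibniz_products
        divide_right_mono dznorm_le_lower_norm_products) auto
  also have "\<dots> \<le> (1 + K) * (1 + c) * (A + B)"
    using nonneg by (simp add: algebra_simps mult_right_mono)
  finally show ?thesis unfolding A_def B_def .
qed

theorem pds_boosts_mult_commutator_le:
  fixes I J :: "3 list"
  assumes V: "open V" and f: "smooth_on V f" and u: "smooth_on V u" and x: "x \<in> V"
    and t: "x $ 0 > 0" and a1: "\<bar>x $ 1\<bar> \<le> x $ 0" and a2: "\<bar>x $ 2\<bar> \<le> x $ 0"
    and J: "set J \<subseteq> {1, 2}"
  defines "p \<equiv> length I + length J"
    and "C \<equiv> 2 ^ (length I + length J) * (1 + commutator_const (length J) (length I + length J))
      * (1 + real (card (boost_indices_below (length J))))"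
  shows "\<bar>pds I (boosts J (\<lambda>y. f y * pd 0 (pd 0 u) y)) x - f x * pd 0 (pd 0 (pds I (boosts J u))) x\<bar>
    \<le> C * leibniz_products I J f u x
      + C * \<bar>f x\<bar> * (\<Sum>J'\<in>boost_indices_below (length J). \<bar>pd 0 (pd 0 (pds I (boosts J' u))) x\<bar>)
      + C * (1 / x $ 0) * lower_norm_products p (length J) f u x
      + C * (1 / x $ 0) * \<bar>f x\<bar> * dznorm p (length J) u x"
proof -
  define K where "K = commutator_const (length J) p"
  define AB where "AB = leibniz_products I J f u x + lower_norm_products p (length J) f u x / x $ 0"
  define QD where "QD = (\<Sum>J'\<in>boost_indices_below (length J). \<bar>pd 0 (pd 0 (pds I (boosts J' u))) x\<bar>)
    + dznorm p (length J) u x / x $ 0"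
  have "0 \<le> AB" "0 \<le> QD" "0 \<le> K"
    using t leibniz_products_nonneg lower_norm_products_nonneg dznorm_nonneg commutator_const_nonneg
    by (auto simp: AB_def QD_def K_def intro!: add_nonneg_nonneg sum_nonneg)
  define c where "c = real (card (boost_indices_below (length J)))"
  have "\<bar>pds I (boosts J (\<lambda>y. f y * pd 0 (pd 0 u) y)) x - f x * pds I (boosts J (pd 0 (pd 0 u))) x\<bar>
      \<le> 2 ^ (length I + length J) * ((1 + K) * (1 + c) * AB)"
  proof (rule pds_boosts_mult_remainder_le[OF V f smooth_on_pd[OF smooth_on_pd[OF u]] x])
    show "0 \<le> (1 + K) * (1 + c) * AB"
      using \<open>0 \<le> AB\<close> \<open>0 \<le> K\<close> by (simp add: c_def)
  qed (use J in \<open>auto simp: AB_def K_def c_def p_def intro!: leibniz_term_le[OF V u x t a1 a2]\<close>)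
  also have "\<dots> = C * AB"
    by (simp add: C_def K_def c_def p_def mult.assoc)
  finally have "\<bar>pds I (boosts J (\<lambda>y. f y * pd 0 (pd 0 u) y)) x - f x * pds I (boosts J (pd 0 (pd 0 u))) x\<bar>
      \<le> C * AB" .
  moreover have "\<bar>f x * (pds I (boosts J (pd 0 (pd 0 u))) x - pd 0 (pd 0 (pds I (boosts J u))) x)\<bar>
      \<le> \<bar>f x\<bar> * (K * QD)"
    unfolding abs_mult K_def QD_def p_def
    by (intro mult_left_mono pds_boosts_pd0_pd0_commutator_le[OF V u x t a1 a2 J]) auto
  moreover have "K \<le> C"
  proof -
    have "K \<le> (1 + K) * (1 + c)"
      using \<open>0 \<le> K\<close> by (simp add: c_def algebra_simps)
    also have "\<dots> \<le> 2 ^ p * ((1 + K) * (1 + c))"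
      using mult_right_mono[of 1 "2 ^ p" "(1 + K) * (1 + c)"] \<open>0 \<le> K\<close> by (simp add: c_def)
    finally show ?thesis by (simp add: C_def K_def c_def p_def mult.assoc)
  qed
  ultimately have "\<bar>pds I (boosts J (\<lambda>y. f y * pd 0 (pd 0 u) y)) x - f x * pd 0 (pd 0 (pds I (boosts J u))) x\<bar>
      \<le> C * AB + C * (\<bar>f x\<bar> * QD)"
    using mult_right_mono[OF \<open>K \<le> C\<close>, of "\<bar>f x\<bar> * QD"] \<open>0 \<le> QD\<close> by (simp add: algebra_simps)
  thus ?thesis
    unfolding AB_def QD_def by (simp add: algebra_simps)
qed

lemma smooth_on_Hunder:
  assumes V: "open V" and nz: "\<forall>y\<in>V. y $ 0 \<noteq> 0" and H: "\<And>a b. smooth_on V (H a b)"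
  shows "smooth_on V (Hunder H)"
proof (rule smooth_on_cong_on[OF V])
  define s where "s y = inverse (y $ 0)" for y :: "real^3"
  have s: "smooth_on V s" unfolding s_def by (rule smooth_on_inverse_coord[OF V nz])
  show "smooth_on V (\<lambda>y. H 0 0 y + (- 2) * ((y $ 1 * s y) * H 1 0 y + (y $ 2 * s y) * H 2 0 y)
      + ((y $ 1 * y $ 1 * (s y * s y)) * H 1 1 y + (y $ 1 * y $ 2 * (s y * s y)) * H 1 2 y
      + ((y $ 2 * y $ 1 * (s y * s y)) * H 2 1 y + (y $ 2 * y $ 2 * (s y * s y)) * H 2 2 y)))"
    by (intro smooth_on_add smooth_on_mult smooth_on_const smooth_on_coord s H V)
  have "(1::3) \<noteq> 2" by simp
  with nz show "\<forall>y\<in>V. H 0 0 y + (- 2) * ((y $ 1 * s y) * H 1 0 y + (y $ 2 * s y) * H 2 0 y)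
      + ((y $ 1 * y $ 1 * (s y * s y)) * H 1 1 y + (y $ 1 * y $ 2 * (s y * s y)) * H 1 2 y
      + ((y $ 2 * y $ 1 * (s y * s y)) * H 2 1 y + (y $ 2 * y $ 2 * (s y * s y)) * H 2 2 y))
      = Hunder H y"
    by (simp add: Hunder_def s_def field_simps power2_eq_square)
qed

lemma Kreg_in_cone:
  assumes "x \<in> Kreg s0 s1"
  shows "0 < x $ 0" "\<bar>x $ 1\<bar> \<le> x $ 0" "\<bar>x $ 2\<bar> \<le> x $ 0"
proof -
  have "\<bar>x $ 1\<bar> \<le> rad x" "\<bar>x $ 2\<bar> \<le> rad x"
    unfolding rad_def by (simp_all add: real_le_rsqrt)
  moreover have "0 \<le> rad x" "rad x + 1 < x $ 0"
    using assms by (simp_all add: rad_def Kreg_def)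
  ultimately show "0 < x $ 0" "\<bar>x $ 1\<bar> \<le> x $ 0" "\<bar>x $ 2\<bar> \<le> x $ 0" by linarith+
qed

theorem lemma5p9:
  fixes I J :: "3 list"
  assumes "set J \<subseteq> {1, 2}"
  shows "\<exists>C::real. \<forall>s0 s1 U u (H :: 3 \<Rightarrow> 3 \<Rightarrow> real^3 \<Rightarrow> real) x.
    open U \<longrightarrow> Kreg s0 s1 \<subseteq> U \<longrightarrow> smooth_on U u \<longrightarrow>
    (\<forall>\<alpha> \<beta>. smooth_on U (H \<alpha> \<beta>)) \<longrightarrow> (\<forall>\<alpha> \<beta>. H \<alpha> \<beta> = H \<beta> \<alpha>) \<longrightarrow>
    x \<in> Kreg s0 s1 \<longrightarrow>
    (let Hu = Hunder H; p = length I + length J; k = length J in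
     \<bar>pds I (boosts J (\<lambda>y. Hu y * pd 0 (pd 0 u) y)) x
        - Hu x * pd 0 (pd 0 (pds I (boosts J u))) x\<bar>
     \<le> C * (\<Sum>(I1, I2, J1, J2) \<in> {(I1, I2, J1, J2). length I1 + length I2 \<le> length I
              \<and> set J1 \<subseteq> {1, 2} \<and> set J2 \<subseteq> {1, 2} \<and> length J1 + length J2 \<le> length J
              \<and> length I2 + length J2 \<ge> 1}.
            \<bar>pds I2 (boosts J2 Hu) x\<bar> * \<bar>pd 0 (pd 0 (pds I1 (boosts J1 u))) x\<bar>)
       + C * \<bar>Hu x\<bar> * (\<Sum>J' \<in> {J'. set J' \<subseteq> {1, 2} \<and> length J' < length J}.
            \<bar>pd 0 (pd 0 (pds I (boosts J' u))) x\<bar>)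
       + C * (1 / x$0) * (\<Sum>(p1, p2, k1, k2) \<in> {(p1, p2, k1, k2). p1 + p2 \<le> p \<and> p1 < p
              \<and> k1 + k2 \<le> k}.
            znorm p2 k2 Hu x * dznorm (p1 + 1) (k1 + 1) u x)
       + C * (1 / x$0) * \<bar>Hu x\<bar> * dznorm p k u x)"
proof -
  define C where "C = 2 ^ (length I + length J) * (1 + commutator_const (length J) (length I + length J))
    * (1 + real (card (boost_indices_below (length J))))"
  show ?thesis
  proof (intro exI[of _ C] allI impI, goal_cases)
    case (1 s0 s1 U u H x)
    hence U: "open U" and KU: "Kreg s0 s1 \<subseteq> U" and u: "smooth_on U u"
      and H: "\<forall>\<alpha> \<beta>. smooth_on U (H \<alpha> \<beta>)" and xK: "x \<in> Kreg s0 s1" by blast+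
    define V where "V = U \<inter> {y. 0 < y $ 0}"
    have V: "open V"
      unfolding V_def by (intro open_Int U open_Collect_less continuous_intros)
    have VU: "V \<subseteq> U" and x: "x \<in> V"
      using xK KU Kreg_in_cone(1)[OF xK] by (auto simp: V_def)
    have "smooth_on V (Hunder H)"
      using H smooth_on_subset[OF _ VU] by (intro smooth_on_Hunder[OF V]) (auto simp: V_def)
    from pds_boosts_mult_commutator_le[OF V this smooth_on_subset[OF u VU] x Kreg_in_cone[OF xK] assms]
    show ?case
      unfolding Let_def C_def leibniz_products_def[symmetric] lower_norm_products_def[symmetric]
        boost_indices_below_def[symmetric] .
  qed
qed

end
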